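(* Let $B$ be an aperiodic Bratteli diagram of rank $d$. (1) $\mu(\mathcal O_B(1))=1$ if and only if there is a strictly increasing sequence $(n_k)_{k\ge1}$ with $\sum_{k=1}^\infty\mu(G_{n_k}^{n_{k+1},1})=\infty$. (2) Let $1<j\le d$. Then $\mu(\mathcal O_B(j))=1$ if and only if there is a strictly increasing sequence $(n_k)$ with $\sum_k\mu(G_{n_k}^{n_{k+1},j})=\infty$ and, for every $1\le i<j$ and every strictly increasing sequence $(m_k)$, $\sum_k\mu(G_{m_k}^{m_{k+1},i})<\infty$.
   Context: A Bratteli diagram $B$ has levels $V_n$ ($V_0=\{v_0\}$, finite) and finite edge sets $E_n$ from $V_{n-1}$ to $V_n$ with source/range maps $s,r$; $X_B$ is its path space; aperiodic means every tail-equivalence class is infinite. Rank $d$: $\sup_n|V_n|<\infty$ and $d$ is the least integer with $|V_n|=d$ infinitely often. An ordering $\omega$ is a linear order on each $r^{-1}(v)$, $v\ne v_0$; $\mathcal O_B=\prod_{v\ne v_0}P_v$ with $\mu=\prod_v\mu_v$, $\mu_v$ uniform on the set $P_v$ of linear orders of $r^{-1}(v)$. $\mathcal O_B(j)$: orderings with exactly $j$ maximal infinite paths (paths all of whose edges are maximal). For $k<n$ and $1\le i\le d$, $G_k^{n,i}$ is the set of orderings $\omega$ such that the $\omega$-maximal finite paths from level $k$ to the vertices of $V_n$ (for each $v\in V_n$, the path from level $k$ to $v$ consisting of maximal edges) have exactly $i$ distinct sources in $V_k$. *)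

theory Defs
  imports "HOL-Probability.Probability"
begin

text \<open>A Bratteli diagram is given by vertex sets V n (n \<ge> 0), edge sets E n (n \<ge> 1)
  of edges from level n-1 to level n, and level-indexed source/range maps s n, r n.
  A vertex is the pair (n,v) with v \<in> V n; an edge of level n is an element of E n.\<close>

definition bratteli ::
  "(nat \<Rightarrow> 'v set) \<Rightarrow> (nat \<Rightarrow> 'e set) \<Rightarrow> (nat \<Rightarrow> 'e \<Rightarrow> 'v) \<Rightarrow> (nat \<Rightarrow> 'e \<Rightarrow> 'v) \<Rightarrow> bool" where
  "bratteli V E s r \<longleftrightarrow>
     card (V 0) = 1 \<and>
     (\<forall>n. finite (V n) \<and> V n \<noteq> {}) \<and>
     (\<forall>n\<ge>1. finite (E n) \<and> (\<forall>e\<in>E n. s n e \<in> V (n - 1) \<and> r n e \<in> V n)) \<and>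
     (\<forall>n\<ge>1. \<forall>v\<in>V n. \<exists>e\<in>E n. r n e = v) \<and>
     (\<forall>n. \<forall>v\<in>V n. \<exists>e\<in>E (Suc n). s (Suc n) e = v)"

text \<open>Infinite paths (x 1, x 2, ...) with x n \<in> E n; the unused entry x 0 is fixed.\<close>
definition path_space ::
  "(nat \<Rightarrow> 'e set) \<Rightarrow> (nat \<Rightarrow> 'e \<Rightarrow> 'v) \<Rightarrow> (nat \<Rightarrow> 'e \<Rightarrow> 'v) \<Rightarrow> (nat \<Rightarrow> 'e) set" where
  "path_space E s r = {x. x 0 = undefined \<and> (\<forall>n\<ge>1. x n \<in> E n \<and> r n (x n) = s (Suc n) (x (Suc n)))}"

definition tail_equiv :: "(nat \<Rightarrow> 'e) \<Rightarrow> (nat \<Rightarrow> 'e) \<Rightarrow> bool" where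
  "tail_equiv x y \<longleftrightarrow> (\<exists>N. \<forall>n\<ge>N. x n = y n)"

definition aperiodic ::
  "(nat \<Rightarrow> 'e set) \<Rightarrow> (nat \<Rightarrow> 'e \<Rightarrow> 'v) \<Rightarrow> (nat \<Rightarrow> 'e \<Rightarrow> 'v) \<Rightarrow> bool" where
  "aperiodic E s r \<longleftrightarrow>
     (\<forall>x\<in>path_space E s r. infinite {y\<in>path_space E s r. tail_equiv x y})"

definition has_rank :: "(nat \<Rightarrow> 'v set) \<Rightarrow> nat \<Rightarrow> bool" where
  "has_rank V d \<longleftrightarrow> (\<exists>M. \<forall>n. card (V n) \<le> M) \<and>
     infinite {n. card (V n) = d} \<and> (\<forall>m<d. finite {n. card (V n) = m})"

definition in_edges :: "(nat \<Rightarrow> 'e set) \<Rightarrow> (nat \<Rightarrow> 'e \<Rightarrow> 'v) \<Rightarrow> nat \<Rightarrow> 'v \<Rightarrow> 'e set" where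
  "in_edges E r n v = {e\<in>E n. r n e = v}"

definition orders_at :: "(nat \<Rightarrow> 'e set) \<Rightarrow> (nat \<Rightarrow> 'e \<Rightarrow> 'v) \<Rightarrow> nat \<Rightarrow> 'v \<Rightarrow> 'e rel set" where
  "orders_at E r n v = {R. linear_order_on (in_edges E r n v) R}"

text \<open>Index set of the vertices different from v0.\<close>
definition vertex_index :: "(nat \<Rightarrow> 'v set) \<Rightarrow> (nat \<times> 'v) set" where
  "vertex_index V = {(n, v). n \<ge> 1 \<and> v \<in> V n}"

definition ordering_measure ::
  "(nat \<Rightarrow> 'v set) \<Rightarrow> (nat \<Rightarrow> 'e set) \<Rightarrow> (nat \<Rightarrow> 'e \<Rightarrow> 'v) \<Rightarrow> (nat \<times> 'v \<Rightarrow> 'e rel) measure" where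
  "ordering_measure V E r =
     PiM (vertex_index V) (\<lambda>(n, v). measure_pmf (pmf_of_set (orders_at E r n v)))"

definition orderings ::
  "(nat \<Rightarrow> 'v set) \<Rightarrow> (nat \<Rightarrow> 'e set) \<Rightarrow> (nat \<Rightarrow> 'e \<Rightarrow> 'v) \<Rightarrow> (nat \<times> 'v \<Rightarrow> 'e rel) set" where
  "orderings V E r = PiE (vertex_index V) (\<lambda>(n, v). orders_at E r n v)"

definition max_edge ::
  "(nat \<Rightarrow> 'e set) \<Rightarrow> (nat \<Rightarrow> 'e \<Rightarrow> 'v) \<Rightarrow> (nat \<times> 'v \<Rightarrow> 'e rel) \<Rightarrow> nat \<Rightarrow> 'e \<Rightarrow> bool" where
  "max_edge E r \<omega> n e \<longleftrightarrow> e \<in> E n \<and>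
     (\<forall>e'\<in>in_edges E r n (r n e). (e', e) \<in> \<omega> (n, r n e))"

definition top_edge ::
  "(nat \<Rightarrow> 'e set) \<Rightarrow> (nat \<Rightarrow> 'e \<Rightarrow> 'v) \<Rightarrow> (nat \<times> 'v \<Rightarrow> 'e rel) \<Rightarrow> nat \<Rightarrow> 'v \<Rightarrow> 'e" where
  "top_edge E r \<omega> n v = (THE e. r n e = v \<and> max_edge E r \<omega> n e)"

fun max_descend ::
  "(nat \<Rightarrow> 'e set) \<Rightarrow> (nat \<Rightarrow> 'e \<Rightarrow> 'v) \<Rightarrow> (nat \<Rightarrow> 'e \<Rightarrow> 'v) \<Rightarrow> (nat \<times> 'v \<Rightarrow> 'e rel)
     \<Rightarrow> nat \<Rightarrow> nat \<Rightarrow> 'v \<Rightarrow> 'v" where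
  "max_descend E s r \<omega> 0 n v = v"
| "max_descend E s r \<omega> (Suc m) n v = max_descend E s r \<omega> m (n - 1) (s n (top_edge E r \<omega> n v))"

definition O_j ::
  "(nat \<Rightarrow> 'v set) \<Rightarrow> (nat \<Rightarrow> 'e set) \<Rightarrow> (nat \<Rightarrow> 'e \<Rightarrow> 'v) \<Rightarrow> (nat \<Rightarrow> 'e \<Rightarrow> 'v) \<Rightarrow> nat
     \<Rightarrow> (nat \<times> 'v \<Rightarrow> 'e rel) set" where
  "O_j V E s r j = {\<omega>\<in>orderings V E r.
     finite {x\<in>path_space E s r. \<forall>n\<ge>1. max_edge E r \<omega> n (x n)} \<and>
     card {x\<in>path_space E s r. \<forall>n\<ge>1. max_edge E r \<omega> n (x n)} = j}"

definition G_set ::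
  "(nat \<Rightarrow> 'v set) \<Rightarrow> (nat \<Rightarrow> 'e set) \<Rightarrow> (nat \<Rightarrow> 'e \<Rightarrow> 'v) \<Rightarrow> (nat \<Rightarrow> 'e \<Rightarrow> 'v)
     \<Rightarrow> nat \<Rightarrow> nat \<Rightarrow> nat \<Rightarrow> (nat \<times> 'v \<Rightarrow> 'e rel) set" where
  "G_set V E s r k n i = {\<omega>\<in>orderings V E r.
     card ((\<lambda>v. max_descend E s r \<omega> (n - k) n v) ` V n) = i}"

end

theory Submission
  imports Defs
begin

(*
  Fix an ordering \<omega>.  Every vertex v of level n \<ge> 1 has a unique \<omega>-maximal incoming edge, so
  following maximal edges downward from level n to level k defines a map V n \<rightarrow> V k; its image
  S(\<omega>,k,n) is the set whose cardinality defines G_k^{n,i}.  For fixed k these sets decrease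
  in n, and by a Koenig-type argument they stabilise at T(\<omega>,k), the set of level-k vertices
  visited by maximal infinite paths.  If sup |V n| is finite, there are only finitely many
  maximal infinite paths, distinct ones eventually run through distinct vertices, and hence
  the number of maximal paths equals |T(\<omega>,k)| for all large k.  Consequently
    (a) #max paths = j  iff  |S(\<omega>,k,n)| = j for all large k and then all large n, and
    (b) #max paths \<le> i  if  |S(\<omega>,m_k,m_{k+1})| = i for infinitely many k.
  On the measure side, the orderings at different vertices are independent, and the event
  G_k^{n,i} only depends on the vertices of levels k+1..n.  Hence for a strictly increasing
  (m_k) the events G_{m_k}^{m_{k+1},i} are independent, and the second Borel-Cantelli lemma
  together with (b) shows: divergence of their measures forces #max paths \<le> i almost surely.
  Conversely, by (a) and continuity of the measure, \<mu>(O_B(j)) > 0 yields a sequence (n_k)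
  along which \<mu>(G_{n_k}^{n_{k+1},j}) stays bounded below, so the series diverges.
  The main theorem combines the two directions; it only uses that sup |V n| is finite
  (aperiodicity and the exact value of the rank are not needed).
*)

lemma linear_order_on_finite_has_greatest:
  assumes lo: "linear_order_on A R" and "finite F" "F \<noteq> {}" "F \<subseteq> A"
  shows "\<exists>e\<in>F. \<forall>e'\<in>F. (e', e) \<in> R"
  using assms(2,3,4)
proof (induction F rule: finite_ne_induct)
  case (singleton x) then show ?case using lo
    unfolding linear_order_on_def partial_order_on_def preorder_on_def refl_on_def by auto
next
  case (insert x F)
  then obtain m where m: "m \<in> F" "\<forall>e'\<in>F. (e', m) \<in> R" by auto
  from lo have tr: "trans R" and tot: "total_on A R" and rf: "refl_on A R"
    unfolding linear_order_on_def partial_order_on_def preorder_on_def by auto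
  show ?case
  proof (cases "(m, x) \<in> R")
    case True
    then have "\<forall>e'\<in>insert x F. (e', x) \<in> R"
      using m tr rf insert.prems unfolding trans_def refl_on_def by blast
    then show ?thesis by auto
  next
    case False
    then have "(x, m) \<in> R"
      using tot rf insert.prems m unfolding total_on_def refl_on_def by (cases "x = m") auto
    then show ?thesis using m by auto
  qed
qed

section \<open>Combinatorics of maximal edges\<close>

locale bounded_bratteli =
  fixes V :: "nat \<Rightarrow> 'v set" and E :: "nat \<Rightarrow> 'e set" and s r :: "nat \<Rightarrow> 'e \<Rightarrow> 'v"
    and Mb :: nat
  assumes bratteli: "bratteli V E s r"
    and card_V_bound: "\<And>n. card (V n) \<le> Mb"
begin

lemma finite_V: "finite (V n)" and V_nonempty: "V n \<noteq> {}"
  using bratteli unfolding bratteli_def by auto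

lemma finite_E: "n \<ge> 1 \<Longrightarrow> finite (E n)"
  using bratteli unfolding bratteli_def by auto

lemma source_in_V: "n \<ge> 1 \<Longrightarrow> e \<in> E n \<Longrightarrow> s n e \<in> V (n - 1)"
  using bratteli unfolding bratteli_def by auto

lemma range_in_V: "n \<ge> 1 \<Longrightarrow> e \<in> E n \<Longrightarrow> r n e \<in> V n"
  using bratteli unfolding bratteli_def by auto

lemma in_edge_exists: "n \<ge> 1 \<Longrightarrow> v \<in> V n \<Longrightarrow> \<exists>e\<in>E n. r n e = v"
  using bratteli unfolding bratteli_def by auto

abbreviation Ords where "Ords \<equiv> orderings V E r"

lemma ordering_linear:
  "\<omega> \<in> Ords \<Longrightarrow> n \<ge> 1 \<Longrightarrow> v \<in> V n \<Longrightarrow> linear_order_on (in_edges E r n v) (\<omega> (n, v))"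
  unfolding orderings_def
  by (drule PiE_mem[where x="(n,v)"]) (auto simp: vertex_index_def orders_at_def)

text \<open>Two maximal edges with the same range coincide (antisymmetry).\<close>
lemma max_edge_unique:
  assumes "\<omega> \<in> Ords" "n \<ge> 1" "r n e1 = r n e2" "max_edge E r \<omega> n e1" "max_edge E r \<omega> n e2"
  shows "e1 = e2"
proof -
  let ?v = "r n e1"
  have e: "e1 \<in> E n" "e2 \<in> E n" using assms unfolding max_edge_def by auto
  have lo: "linear_order_on (in_edges E r n ?v) (\<omega> (n, ?v))"
    using ordering_linear assms(1,2) range_in_V[OF assms(2) e(1)] by auto
  have "(e2, e1) \<in> \<omega> (n, ?v)" "(e1, e2) \<in> \<omega> (n, ?v)"
    using assms(3-5) e unfolding max_edge_def in_edges_def by auto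
  then show ?thesis using lo unfolding linear_order_on_def partial_order_on_def antisym_def by auto
qed

lemma top_edge_props:
  assumes "\<omega> \<in> Ords" "n \<ge> 1" "v \<in> V n"
  shows "r n (top_edge E r \<omega> n v) = v \<and> max_edge E r \<omega> n (top_edge E r \<omega> n v)"
proof -
  have lo: "linear_order_on (in_edges E r n v) (\<omega> (n, v))" using ordering_linear assms by auto
  have fin: "finite (in_edges E r n v)" using finite_E[OF assms(2)] unfolding in_edges_def by auto
  have ne: "in_edges E r n v \<noteq> {}" using in_edge_exists[OF assms(2,3)] unfolding in_edges_def by auto
  obtain e where "e \<in> in_edges E r n v" "\<forall>e'\<in>in_edges E r n v. (e', e) \<in> \<omega> (n, v)"
    using linear_order_on_finite_has_greatest[OF lo fin ne] by auto
  then have "\<exists>e. r n e = v \<and> max_edge E r \<omega> n e" unfolding max_edge_def in_edges_def by auto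
  then have "\<exists>!e. r n e = v \<and> max_edge E r \<omega> n e"
    using max_edge_unique[OF assms(1,2)] by metis
  then show ?thesis unfolding top_edge_def by (rule theI')
qed

lemma top_edge_in_E: "\<omega> \<in> Ords \<Longrightarrow> n \<ge> 1 \<Longrightarrow> v \<in> V n \<Longrightarrow> top_edge E r \<omega> n v \<in> E n"
  using top_edge_props unfolding max_edge_def by blast

lemma top_edge_of_max_edge:
  assumes "\<omega> \<in> Ords" "n \<ge> 1" "max_edge E r \<omega> n e"
  shows "top_edge E r \<omega> n (r n e) = e"
proof -
  have "r n e \<in> V n" using assms(2,3) range_in_V unfolding max_edge_def by auto
  then show ?thesis using top_edge_props[OF assms(1,2)] max_edge_unique[OF assms(1,2)] assms(3) by metis
qed

lemma top_edge_cong: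
  assumes "\<omega> (n, v) = \<omega>' (n, v)"
  shows "top_edge E r \<omega> n v = top_edge E r \<omega>' n v"
proof -
  have "(r n e = v \<and> max_edge E r \<omega> n e) \<longleftrightarrow> (r n e = v \<and> max_edge E r \<omega>' n e)" for e
    unfolding max_edge_def using assms by auto
  then show ?thesis unfolding top_edge_def by simp
qed

abbreviation descend where "descend \<omega> \<equiv> max_descend E s r \<omega>"

lemma descend_in_V: "\<omega> \<in> Ords \<Longrightarrow> v \<in> V n \<Longrightarrow> m \<le> n \<Longrightarrow> descend \<omega> m n v \<in> V (n - m)"
proof (induction m arbitrary: n v)
  case (Suc m)
  then have "s n (top_edge E r \<omega> n v) \<in> V (n - 1)"
    using source_in_V top_edge_in_E by simp
  with Suc.IH[OF Suc.prems(1) this] Suc.prems show ?case by simp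
qed simp

lemma descend_add: "descend \<omega> (a + b) n v = descend \<omega> b (n - a) (descend \<omega> a n v)"
  by (induction a arbitrary: n v) (simp_all add: diff_diff_add)

definition max_sources where "max_sources \<omega> k n = (\<lambda>v. descend \<omega> (n - k) n v) ` V n"

lemma G_set_eq: "G_set V E s r k n i = {\<omega>\<in>Ords. card (max_sources \<omega> k n) = i}"
  unfolding G_set_def max_sources_def by simp

lemma max_sources_subset:
  assumes "\<omega> \<in> Ords" "k \<le> n"
  shows "max_sources \<omega> k n \<subseteq> V k"
proof -
  have "descend \<omega> (n - k) n v \<in> V k" if "v \<in> V n" for v
    using descend_in_V[OF assms(1) that, of "n - k"] assms(2) by simp
  then show ?thesis unfolding max_sources_def by auto
qed

lemma max_sources_nonempty: "max_sources \<omega> k n \<noteq> {}"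
  unfolding max_sources_def using V_nonempty by auto

lemma finite_max_sources: "finite (max_sources \<omega> k n)"
  unfolding max_sources_def using finite_V by auto

text \<open>Every maximal path to level n+1 passes through level n, so S(\<omega>,k,n) decreases in n.\<close>
lemma max_sources_Suc:
  assumes "\<omega> \<in> Ords" "k \<le> n"
  shows "max_sources \<omega> k (Suc n) \<subseteq> max_sources \<omega> k n"
proof
  fix u assume "u \<in> max_sources \<omega> k (Suc n)"
  then obtain v where v: "v \<in> V (Suc n)" "u = descend \<omega> (Suc n - k) (Suc n) v"
    unfolding max_sources_def by auto
  have "Suc n - k = 1 + (n - k)" using assms by auto
  then have "u = descend \<omega> (n - k) n (descend \<omega> 1 (Suc n) v)"
    using v descend_add[of \<omega> 1 "n - k" "Suc n" v] by simp
  moreover have "descend \<omega> 1 (Suc n) v \<in> V n" using descend_in_V[OF assms(1) v(1), of 1] by simp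
  ultimately show "u \<in> max_sources \<omega> k n" unfolding max_sources_def by auto
qed

lemma max_sources_antimono:
  assumes "\<omega> \<in> Ords" "k \<le> n" "n \<le> n'"
  shows "max_sources \<omega> k n' \<subseteq> max_sources \<omega> k n"
  using assms(3)
proof (induction n' rule: dec_induct)
  case (step m) then show ?case using max_sources_Suc[OF assms(1), of k m] assms(2) by auto
qed simp

section \<open>Maximal infinite paths\<close>

definition max_paths where
  "max_paths \<omega> = {x\<in>path_space E s r. \<forall>n\<ge>1. max_edge E r \<omega> n (x n)}"

definition vertex_at :: "(nat \<Rightarrow> 'e) \<Rightarrow> nat \<Rightarrow> 'v" where
  "vertex_at x n = s (Suc n) (x (Suc n))"

lemma O_j_eq: "O_j V E s r j = {\<omega>\<in>Ords. finite (max_paths \<omega>) \<and> card (max_paths \<omega>) = j}"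
  unfolding O_j_def max_paths_def ..

lemma path_edge: "x \<in> path_space E s r \<Longrightarrow> n \<ge> 1 \<Longrightarrow> x n \<in> E n \<and> r n (x n) = vertex_at x n"
  unfolding path_space_def vertex_at_def by auto

lemma vertex_at_in_V: "x \<in> path_space E s r \<Longrightarrow> vertex_at x n \<in> V n"
  using path_edge[of x "Suc n"] source_in_V[of "Suc n" "x (Suc n)"] unfolding vertex_at_def by auto

lemma max_path_edge:
  "\<omega> \<in> Ords \<Longrightarrow> x \<in> max_paths \<omega> \<Longrightarrow> n \<ge> 1 \<Longrightarrow> x n = top_edge E r \<omega> n (vertex_at x n)"
  using top_edge_of_max_edge[of \<omega> n "x n"] path_edge[of x n] unfolding max_paths_def by auto

lemma descend_max_path:
  assumes "\<omega> \<in> Ords" "x \<in> max_paths \<omega>"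
  shows "m \<le> n \<Longrightarrow> descend \<omega> m n (vertex_at x n) = vertex_at x (n - m)"
proof (induction m)
  case (Suc m)
  have "descend \<omega> (m + 1) n (vertex_at x n) = descend \<omega> 1 (n - m) (vertex_at x (n - m))"
    using Suc by (simp only: descend_add)
  also have "\<dots> = s (n - m) (x (n - m))"
    using max_path_edge[OF assms, of "n - m"] Suc.prems by simp
  also have "\<dots> = vertex_at x (n - Suc m)"
    using Suc.prems unfolding vertex_at_def by (simp add: Suc_diff_Suc)
  finally show ?case by simp
qed simp

text \<open>A maximal path is determined by its vertices; hence two distinct maximal paths differ
  at some level, and then at every higher level.\<close>
lemma max_paths_eventually_apart:
  assumes O: "\<omega> \<in> Ords" and xy: "x \<in> max_paths \<omega>" "y \<in> max_paths \<omega>" "x \<noteq> y"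
  shows "\<exists>l. \<forall>n\<ge>l. vertex_at x n \<noteq> vertex_at y n"
proof -
  have "\<exists>l. vertex_at x l \<noteq> vertex_at y l"
  proof (rule ccontr)
    assume "\<not> ?thesis"
    then have "x n = y n" for n
      using xy max_path_edge[OF O xy(1), of n] max_path_edge[OF O xy(2), of n]
      by (cases "n = 0") (auto simp: max_paths_def path_space_def)
    then show False using xy(3) by blast
  qed
  then obtain l where l: "vertex_at x l \<noteq> vertex_at y l" by blast
  have "vertex_at x l = vertex_at y l" if "l \<le> n" "vertex_at x n = vertex_at y n" for n
    using descend_max_path[OF O xy(1), of "n - l" n] descend_max_path[OF O xy(2), of "n - l" n] that
    by simp
  then show ?thesis using l by blast
qed

definition max_trace where "max_trace \<omega> k = (\<lambda>x. vertex_at x k) ` max_paths \<omega>"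

lemma finite_max_trace: "finite (max_trace \<omega> k)"
proof (rule finite_subset[OF _ finite_V])
  show "max_trace \<omega> k \<subseteq> V k"
    unfolding max_trace_def max_paths_def using vertex_at_in_V by auto
qed

lemma max_trace_subset_max_sources:
  assumes "\<omega> \<in> Ords" "k \<le> n"
  shows "max_trace \<omega> k \<subseteq> max_sources \<omega> k n"
proof
  fix u assume "u \<in> max_trace \<omega> k"
  then obtain x where x: "x \<in> max_paths \<omega>" "u = vertex_at x k" unfolding max_trace_def by auto
  have "u = descend \<omega> (n - k) n (vertex_at x n)"
    using descend_max_path[OF assms(1) x(1), of "n - k" n] x assms by simp
  moreover have "vertex_at x n \<in> V n" using vertex_at_in_V x unfolding max_paths_def by auto
  ultimately show "u \<in> max_sources \<omega> k n" unfolding max_sources_def by auto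
qed

text \<open>T(\<omega>,k) is the image of T(\<omega>,k+1) under one maximal step, so |T(\<omega>,k)| increases in k.\<close>
lemma card_max_trace_Suc:
  assumes "\<omega> \<in> Ords"
  shows "card (max_trace \<omega> k) \<le> card (max_trace \<omega> (Suc k))"
proof -
  have "max_trace \<omega> k = (\<lambda>u. descend \<omega> 1 (Suc k) u) ` max_trace \<omega> (Suc k)"
    unfolding max_trace_def image_image using descend_max_path[OF assms, of _ 1 "Suc k"]
    by (auto intro!: image_cong)
  then show ?thesis using card_image_le[OF finite_max_trace] by metis
qed

section \<open>Koenig's lemma: S(\<omega>,k,n) stabilises at T(\<omega>,k)\<close>

definition persistent where
  "persistent \<omega> m u \<longleftrightarrow> u \<in> V m \<and> (\<forall>n\<ge>m. u \<in> max_sources \<omega> m n)"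

text \<open>Above a persistent vertex u there is a persistent vertex w one level up whose maximal
  edge leads to u: otherwise each of the finitely many candidates w drops out of some S, and
  then all of them have dropped out at the largest of these levels, contradicting persistence
  of u.\<close>
lemma persistent_extend:
  assumes O: "\<omega> \<in> Ords" and u: "persistent \<omega> m u"
  shows "\<exists>w. persistent \<omega> (Suc m) w \<and> descend \<omega> 1 (Suc m) w = u"
proof (rule ccontr)
  assume H: "\<not> ?thesis"
  define W where "W = {w \<in> V (Suc m). descend \<omega> 1 (Suc m) w = u}"
  have "\<forall>w\<in>W. \<exists>n. n \<ge> Suc m \<and> w \<notin> max_sources \<omega> (Suc m) n"
    using H unfolding W_def persistent_def by auto
  then obtain f where f: "\<And>w. w \<in> W \<Longrightarrow> f w \<ge> Suc m \<and> w \<notin> max_sources \<omega> (Suc m) (f w)"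
    by metis
  have finW: "finite W" unfolding W_def using finite_V by auto
  define N where "N = Max (insert (Suc m) (f ` W))"
  have N: "N \<ge> Suc m" "\<And>w. w \<in> W \<Longrightarrow> f w \<le> N" unfolding N_def using finW by auto
  have "u \<in> max_sources \<omega> m N" using u N unfolding persistent_def by auto
  then obtain z where z: "z \<in> V N" "u = descend \<omega> (N - m) N z" unfolding max_sources_def by auto
  define w where "w = descend \<omega> (N - Suc m) N z"
  have "N - m = (N - Suc m) + 1" "N - (N - Suc m) = Suc m" using N by auto
  then have "descend \<omega> 1 (Suc m) w = u"
    using z descend_add[of \<omega> "N - Suc m" 1 N z] unfolding w_def by simp
  moreover have "w \<in> V (Suc m)" using descend_in_V[OF O z(1), of "N - Suc m"] N unfolding w_def by simp
  ultimately have wW: "w \<in> W" unfolding W_def by auto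
  have "w \<in> max_sources \<omega> (Suc m) N" using z(1) unfolding w_def max_sources_def by auto
  then have "w \<in> max_sources \<omega> (Suc m) (f w)"
    using max_sources_antimono[OF O, of "Suc m" "f w" N] f[OF wW] N(2)[OF wW] by auto
  then show False using f[OF wW] by auto
qed

text \<open>A sequence of vertices u n \<in> V n in which each u n is reached from u (n+1) by one
  maximal step is the vertex sequence of a maximal infinite path (the path of top edges).\<close>
lemma max_path_through_chain:
  assumes O: "\<omega> \<in> Ords" and uV: "\<And>n. u n \<in> V n"
    and u_step: "\<And>n. descend \<omega> 1 (Suc n) (u (Suc n)) = u n"
  shows "\<exists>x\<in>max_paths \<omega>. \<forall>n. vertex_at x n = u n"
proof -
  define x where "x n = (if n = 0 then undefined else top_edge E r \<omega> n (u n))" for n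
  have x_source: "s (Suc n) (x (Suc n)) = u n" for n
    using u_step[of n] unfolding x_def by simp
  have "x \<in> path_space E s r"
    unfolding path_space_def
    using top_edge_in_E[OF O _ uV] top_edge_props[OF O _ uV] x_source by (auto simp: x_def)
  then have "x \<in> max_paths \<omega>" unfolding max_paths_def using top_edge_props[OF O _ uV] by (auto simp: x_def)
  moreover have "vertex_at x n = u n" for n unfolding vertex_at_def x_source ..
  ultimately show ?thesis by blast
qed

text \<open>Iterating the extension step upward (and descending below level k) yields such a chain
  through any persistent vertex.\<close>
lemma persistent_in_max_trace:
  assumes O: "\<omega> \<in> Ords" and v: "persistent \<omega> k v"
  shows "v \<in> max_trace \<omega> k"
proof -
  define w where "w = rec_nat v (\<lambda>i wi. SOME w'. persistent \<omega> (Suc (k + i)) w' \<and>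
                                            descend \<omega> 1 (Suc (k + i)) w' = wi)"
  have w: "persistent \<omega> (k + i) (w i) \<and> (\<forall>j. i = Suc j \<longrightarrow> descend \<omega> 1 (Suc (k + j)) (w i) = w j)" for i
  proof (induction i)
    case (Suc i)
    then have "persistent \<omega> (k + i) (w i)" by simp
    from someI_ex[OF persistent_extend[OF O this]] show ?case unfolding w_def by simp
  qed (use v in \<open>simp add: w_def\<close>)
  define u where "u n = (if k \<le> n then w (n - k) else descend \<omega> (k - n) k v)" for n
  have u_below: "n \<le> k \<Longrightarrow> u n = descend \<omega> (k - n) k v" for n
    unfolding u_def by (auto simp: w_def)
  have vV: "v \<in> V k" using v unfolding persistent_def by auto
  have uV: "u n \<in> V n" for n
    using w[of "n - k"] descend_in_V[OF O vV, of "k - n"] unfolding u_def persistent_def by auto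
  have u_step: "descend \<omega> 1 (Suc n) (u (Suc n)) = u n" for n
  proof (cases "k \<le> n")
    case True
    then have "u (Suc n) = w (Suc (n - k))" "Suc (k + (n - k)) = Suc n"
      unfolding u_def by (auto simp: Suc_diff_le)
    then show ?thesis using w[of "Suc (n - k)"] True unfolding u_def by auto
  next
    case False
    then have "k - n = (k - Suc n) + 1" "k - (k - Suc n) = Suc n" by auto
    then show ?thesis using u_below[of n] u_below[of "Suc n"] False
        descend_add[of \<omega> "k - Suc n" 1 k v] by (simp del: max_descend.simps)
  qed
  obtain x where "x \<in> max_paths \<omega>" "vertex_at x k = u k"
    using max_path_through_chain[OF O uV u_step] by blast
  moreover have "u k = v" using u_below[of k] by simp
  ultimately show ?thesis unfolding max_trace_def by (metis image_eqI)
qed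

text \<open>The decreasing sequence of finite sets S(\<omega>,k,n) is eventually constant, and its
  limit consists of persistent vertices; so it is eventually equal to T(\<omega>,k).\<close>
lemma max_sources_stabilise:
  assumes O: "\<omega> \<in> Ords"
  shows "\<exists>N\<ge>k. \<forall>n\<ge>N. max_sources \<omega> k n = max_trace \<omega> k"
proof -
  obtain N where N: "N \<ge> k" "\<And>n. n \<ge> k \<Longrightarrow> card (max_sources \<omega> k N) \<le> card (max_sources \<omega> k n)"
    using ex_has_least_nat[where P="\<lambda>n. n \<ge> k" and k=k and m="\<lambda>n. card (max_sources \<omega> k n)"] by auto
  have const: "max_sources \<omega> k n = max_sources \<omega> k N" if "n \<ge> N" for n
  proof (rule card_subset_eq[OF finite_max_sources])
    show sub: "max_sources \<omega> k n \<subseteq> max_sources \<omega> k N" using max_sources_antimono[OF O N(1) that] .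
    show "card (max_sources \<omega> k n) = card (max_sources \<omega> k N)"
      using N(2)[OF le_trans[OF N(1) that]] card_mono[OF finite_max_sources sub] by linarith
  qed
  have "max_sources \<omega> k N \<subseteq> max_trace \<omega> k"
  proof
    fix u assume u: "u \<in> max_sources \<omega> k N"
    have "u \<in> max_sources \<omega> k n" if "n \<ge> k" for n
    proof (cases "n \<le> N")
      case True then show ?thesis using max_sources_antimono[OF O that True] u by blast
    next
      case False then show ?thesis using const[of n] u by simp
    qed
    moreover have "u \<in> V k" using max_sources_subset[OF O N(1)] u by blast
    ultimately have "persistent \<omega> k u" unfolding persistent_def by blast
    then show "u \<in> max_trace \<omega> k" by (rule persistent_in_max_trace[OF O])
  qed
  then have limit: "max_sources \<omega> k N = max_trace \<omega> k"
    using max_trace_subset_max_sources[OF O N(1)] by blast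
  have "max_sources \<omega> k n = max_trace \<omega> k" if "n \<ge> N" for n
    using const[OF that] limit by (rule trans)
  then show ?thesis using N(1) by blast
qed

section \<open>Counting maximal paths\<close>

lemma max_paths_eventually_inj:
  assumes O: "\<omega> \<in> Ords" and F: "finite F" "F \<subseteq> max_paths \<omega>"
  shows "\<exists>k0. \<forall>k\<ge>k0. inj_on (\<lambda>x. vertex_at x k) F"
proof -
  define D where "D = {p \<in> F \<times> F. fst p \<noteq> snd p}"
  have "\<forall>p\<in>D. \<exists>l. \<forall>n\<ge>l. vertex_at (fst p) n \<noteq> vertex_at (snd p) n"
    using max_paths_eventually_apart[OF O] F unfolding D_def by auto
  then obtain L where L: "\<And>p n. p \<in> D \<Longrightarrow> n \<ge> L p \<Longrightarrow> vertex_at (fst p) n \<noteq> vertex_at (snd p) n"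
    by metis
  have "finite D" unfolding D_def using F by auto
  then have L_bound: "L p \<le> Max (insert 0 (L ` D))" if "p \<in> D" for p
    using that by simp
  have "inj_on (\<lambda>x. vertex_at x k) F" if k: "k \<ge> Max (insert 0 (L ` D))" for k
  proof (rule inj_onI, rule ccontr)
    fix x y assume xy: "x \<in> F" "y \<in> F" "vertex_at x k = vertex_at y k" "x \<noteq> y"
    then have "(x, y) \<in> D" unfolding D_def by auto
    then show False using L[of "(x, y)" k] L_bound[of "(x, y)"] k xy(3) by simp
  qed
  then show ?thesis by blast
qed

text \<open>Since a level has at most Mb vertices, there are at most Mb maximal paths.\<close>
lemma finite_max_paths:
  assumes O: "\<omega> \<in> Ords"
  shows "finite (max_paths \<omega>)"
proof (rule ccontr)
  assume "infinite (max_paths \<omega>)"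
  then obtain F where F: "finite F" "F \<subseteq> max_paths \<omega>" "card F = Suc Mb"
    using infinite_arbitrarily_large by blast
  obtain k0 where k0: "\<forall>k\<ge>k0. inj_on (\<lambda>x. vertex_at x k) F"
    using max_paths_eventually_inj[OF O F(1,2)] by blast
  have "card F = card ((\<lambda>x. vertex_at x k0) ` F)" using card_image k0 by fastforce
  also have "\<dots> \<le> card (V k0)"
    using F(2) vertex_at_in_V unfolding max_paths_def by (intro card_mono finite_V) auto
  also have "\<dots> \<le> Mb" by (rule card_V_bound)
  finally show False using F(3) by simp
qed

lemma O_j_eq_card: "O_j V E s r j = {\<omega>\<in>Ords. card (max_paths \<omega>) = j}"
  unfolding O_j_eq using finite_max_paths by auto

lemma card_max_paths_eq_max_trace:
  assumes O: "\<omega> \<in> Ords"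
  shows "\<exists>k0. \<forall>k\<ge>k0. card (max_paths \<omega>) = card (max_trace \<omega> k)"
  using max_paths_eventually_inj[OF O finite_max_paths[OF O]]
  unfolding max_trace_def by (metis card_image order_refl)

lemma card_max_trace_le: "\<omega> \<in> Ords \<Longrightarrow> card (max_trace \<omega> k) \<le> card (max_paths \<omega>)"
  unfolding max_trace_def using card_image_le finite_max_paths by blast

text \<open>There is at least one maximal path, since T(\<omega>,k) = S(\<omega>,k,n) for large n.\<close>
lemma card_max_paths_ge_1: "\<omega> \<in> Ords \<Longrightarrow> 1 \<le> card (max_paths \<omega>)"
  using max_sources_stabilise[of \<omega> 0] max_sources_nonempty[of \<omega> 0] finite_max_paths
  by (fastforce simp: Suc_le_eq card_gt_0_iff max_trace_def)

lemma card_max_trace_iff: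
  assumes O: "\<omega> \<in> Ords"
  shows "card (max_trace \<omega> k) = j \<longleftrightarrow> (\<exists>N. \<forall>n\<ge>N. card (max_sources \<omega> k n) = j)"
proof -
  obtain N0 where "\<forall>n\<ge>N0. max_sources \<omega> k n = max_trace \<omega> k"
    using max_sources_stabilise[OF O] by blast
  then show ?thesis by (metis nat_le_linear)
qed

lemma card_max_paths_iff:
  assumes O: "\<omega> \<in> Ords"
  shows "card (max_paths \<omega>) = j \<longleftrightarrow> (\<exists>K. \<forall>k\<ge>K. card (max_trace \<omega> k) = j)"
proof -
  obtain k0 where "\<forall>k\<ge>k0. card (max_paths \<omega>) = card (max_trace \<omega> k)"
    using card_max_paths_eq_max_trace[OF O] by blast
  then show ?thesis by (metis nat_le_linear)
qed

lemma card_max_paths_iff_sources: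
  assumes O: "\<omega> \<in> Ords"
  shows "card (max_paths \<omega>) = j \<longleftrightarrow> (\<exists>K. \<forall>k\<ge>K. \<exists>N. \<forall>n\<ge>N. card (max_sources \<omega> k n) = j)"
  unfolding card_max_paths_iff[OF O] card_max_trace_iff[OF O] ..

text \<open>Fact (b) of the overview: if |S(\<omega>,m_k,m_{k+1})| = i infinitely often then there
  are at most i maximal paths, because |T(\<omega>,m_k)| \<le> |S(\<omega>,m_k,m_{k+1})|.\<close>
lemma card_max_paths_le_if_frequently:
  assumes O: "\<omega> \<in> Ords" and m: "strict_mono m"
    and freq: "\<forall>K. \<exists>k\<ge>K. card (max_sources \<omega> (m k) (m (Suc k))) = i"
  shows "card (max_paths \<omega>) \<le> i"
proof -
  obtain k0 where k0: "\<forall>k\<ge>k0. card (max_paths \<omega>) = card (max_trace \<omega> k)"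
    using card_max_paths_eq_max_trace[OF O] by blast
  obtain k where k: "k \<ge> k0" "card (max_sources \<omega> (m k) (m (Suc k))) = i" using freq by blast
  have "k \<le> m k" "m k \<le> m (Suc k)" using m by (simp_all add: strict_mono_imp_increasing strict_mono_less_eq)
  then have "card (max_paths \<omega>) = card (max_trace \<omega> (m k))" using k0 k(1) by (meson le_trans)
  also have "\<dots> \<le> card (max_sources \<omega> (m k) (m (Suc k)))"
    using max_trace_subset_max_sources[OF O \<open>m k \<le> m (Suc k)\<close>] by (intro card_mono finite_max_sources)
  finally show ?thesis using k(2) by simp
qed

definition block where "block k n = {(l, v). k < l \<and> l \<le> n \<and> v \<in> V l}"

lemma max_sources_cong:
  assumes O: "\<omega> \<in> Ords" and agree: "\<forall>i\<in>block k n. \<omega> i = \<omega>' i"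
  shows "max_sources \<omega> k n = max_sources \<omega>' k n"
proof -
  have "descend \<omega> m n' v = descend \<omega>' m n' v"
    if "v \<in> V n'" "n' \<le> n" "k + m \<le> n'" for m n' v
    using that
  proof (induction m arbitrary: n' v)
    case (Suc m)
    have "(n', v) \<in> block k n" using Suc.prems unfolding block_def by auto
    then have "top_edge E r \<omega> n' v = top_edge E r \<omega>' n' v" using agree top_edge_cong by blast
    moreover have "s n' (top_edge E r \<omega> n' v) \<in> V (n' - 1)"
      using Suc.prems source_in_V top_edge_in_E[OF O] by simp
    ultimately show ?case using Suc by simp
  qed simp
  then show ?thesis unfolding max_sources_def
    by (cases "k \<le> n") (auto intro!: image_cong)
qed

lemma finite_block: "finite (block k n)"
proof (rule finite_subset)
  show "block k n \<subseteq> Sigma {..n} V" unfolding block_def by auto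
qed (use finite_V in auto)

lemma block_subset: "block k n \<subseteq> vertex_index V"
  unfolding block_def vertex_index_def by auto

end

section \<open>The second Borel-Cantelli lemma\<close>

lemma not_summable_tail_large:
  fixes p :: "nat \<Rightarrow> real"
  assumes nonneg: "\<And>k. 0 \<le> p k" and div: "\<not> summable p"
  shows "\<exists>L>K. (\<Sum>k\<in>{K..<L}. p k) > B"
proof -
  obtain n where n: "(\<Sum>i<n. p i) > B + (\<Sum>i<K. p i)"
    using summableI_nonneg_bounded[of p "B + (\<Sum>i<K. p i)"] nonneg div by (meson not_less)
  define L where "L = max n (Suc K)"
  have "(\<Sum>i<n. p i) \<le> (\<Sum>i<L. p i)" unfolding L_def by (intro sum_mono2) (auto simp: nonneg)
  moreover have "(\<Sum>i<L. p i) = (\<Sum>i<K. p i) + (\<Sum>k\<in>{K..<L}. p k)"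
    using sum.atLeastLessThan_concat[of 0 K L p] unfolding L_def by (simp add: atLeast0LessThan)
  ultimately have "(\<Sum>k\<in>{K..<L}. p k) > B" using n by linarith
  moreover have "L > K" unfolding L_def by simp
  ultimately show ?thesis by blast
qed

text \<open>For independent X k, the probability of missing all A k with K \<le> k < L is
  \<Prod>(1 - p k) \<le> exp (- \<Sum> p k), where p k is the probability of hitting A k.\<close>
lemma (in prob_space) indep_prob_miss_all_le:
  fixes X :: "nat \<Rightarrow> 'a \<Rightarrow> 'b" and N :: "nat \<Rightarrow> 'b measure" and A :: "nat \<Rightarrow> 'b set"
  assumes ind: "indep_vars N X UNIV" and A: "\<And>k. A k \<in> sets (N k)" and "K < L"
  shows "prob (\<Inter>k\<in>{K..<L}. X k -` (space (N k) - A k) \<inter> space M)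
           \<le> exp (- (\<Sum>k\<in>{K..<L}. prob (X k -` A k \<inter> space M)))"
proof -
  have rv: "\<And>k. X k \<in> measurable M (N k)" using ind unfolding indep_vars_def by auto
  define p where "p k = prob (X k -` A k \<inter> space M)" for k
  have miss: "prob (X k -` (space (N k) - A k) \<inter> space M) = 1 - p k" for k
  proof -
    have "X k -` (space (N k) - A k) \<inter> space M = space M - (X k -` A k \<inter> space M)"
      using measurable_space[OF rv[of k]] by auto
    then show ?thesis unfolding p_def using rv A by (simp add: prob_compl measurable_sets)
  qed
  have "prob (\<Inter>k\<in>{K..<L}. X k -` (space (N k) - A k) \<inter> space M) = (\<Prod>k\<in>{K..<L}. 1 - p k)"
    using assms(3) A rv miss by (subst indep_varsD[OF ind]) auto
  also have "\<dots> \<le> (\<Prod>k\<in>{K..<L}. exp (- p k))"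
  proof (rule prod_mono)
    fix k show "0 \<le> 1 - p k \<and> 1 - p k \<le> exp (- p k)"
      using exp_ge_add_one_self[of "- p k"] unfolding p_def by simp
  qed
  also have "\<dots> = exp (- (\<Sum>k\<in>{K..<L}. p k))" by (simp add: exp_sum[symmetric] sum_negf)
  finally show ?thesis unfolding p_def .
qed

text \<open>Missing
  all A k with k \<ge> K has probability at most exp (- \<Sum>_{K \<le> k < L} p k) for every L, i.e. 0.\<close>
lemma (in prob_space) borel_cantelli_AE2:
  fixes X :: "nat \<Rightarrow> 'a \<Rightarrow> 'b" and N :: "nat \<Rightarrow> 'b measure" and A :: "nat \<Rightarrow> 'b set"
  assumes ind: "indep_vars N X UNIV" and A: "\<And>k. A k \<in> sets (N k)"
    and div: "\<not> summable (\<lambda>k. prob (X k -` A k \<inter> space M))"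
  shows "AE \<omega> in M. \<forall>K. \<exists>k\<ge>K. X k \<omega> \<in> A k"
proof -
  have rv: "\<And>k. X k \<in> measurable M (N k)" using ind unfolding indep_vars_def by auto
  define p where "p k = prob (X k -` A k \<inter> space M)" for k
  define D where "D k = X k -` (space (N k) - A k) \<inter> space M" for k
  have D_events: "D k \<in> events" for k unfolding D_def using rv A by (intro measurable_sets) auto
  define C where "C K = (\<Inter>k\<in>{K..}. D k)" for K
  have C_events: "C K \<in> events" for K unfolding C_def using D_events by (intro sets.countable_INT') auto
  have prob_C: "prob (C K) = 0" for K
  proof (rule ccontr)
    assume "prob (C K) \<noteq> 0"
    then have pos: "prob (C K) > 0" using measure_nonneg[of M "C K"] by linarith
    obtain L where L: "L > K" "(\<Sum>k\<in>{K..<L}. p k) > - ln (prob (C K))"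
      using not_summable_tail_large[of p K "- ln (prob (C K))"] div unfolding p_def by auto
    have "prob (C K) \<le> prob (\<Inter>k\<in>{K..<L}. D k)"
      using C_events D_events L(1) unfolding C_def by (intro finite_measure_mono) auto
    also have "\<dots> \<le> exp (- (\<Sum>k\<in>{K..<L}. p k))"
      using indep_prob_miss_all_le[OF ind A L(1)] unfolding D_def p_def .
    also have "\<dots> < exp (ln (prob (C K)))" using L(2) by simp
    also have "\<dots> = prob (C K)" using pos by simp
    finally show False by simp
  qed
  have "(\<Union>K. C K) \<in> null_sets M"
    using prob_C C_events by (intro null_sets_UN) (auto simp: emeasure_eq_measure)
  moreover have "{\<omega> \<in> space M. \<not> (\<forall>K. \<exists>k\<ge>K. X k \<omega> \<in> A k)} \<subseteq> (\<Union>K. C K)"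
    unfolding C_def D_def using measurable_space[OF rv] by fastforce
  ultimately show ?thesis by (rule AE_I')
qed

section \<open>The measure on orderings\<close>

definition coord_measure :: "(nat \<Rightarrow> 'e set) \<Rightarrow> (nat \<Rightarrow> 'e \<Rightarrow> 'v) \<Rightarrow> nat \<times> 'v \<Rightarrow> 'e rel measure" where
  "coord_measure E r = (\<lambda>(n, v). measure_pmf (pmf_of_set (orders_at E r n v)))"

lemma ordering_measure_PiM: "ordering_measure V E r = PiM (vertex_index V) (coord_measure E r)"
  unfolding ordering_measure_def coord_measure_def ..

lemma coord_measure_apply:
  "coord_measure E r (n, v) = measure_pmf (pmf_of_set (orders_at E r n v))"
  by (simp add: coord_measure_def)

lemma prob_space_coord: "prob_space (coord_measure E r i)"
  by (cases i) (simp add: coord_measure_def prob_space_measure_pmf)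

lemma sets_coord [simp]: "sets (coord_measure E r i) = UNIV"
  and space_coord [simp]: "space (coord_measure E r i) = UNIV"
  by (cases i; simp add: coord_measure_def)+

lemma finite_set_in_sets_PiM:
  assumes "finite J" "finite Y" "Y \<subseteq> extensional J" and discrete: "\<And>i. sets (M i) = UNIV"
  shows "Y \<in> sets (PiM J M)"
proof -
  have "PiE J (\<lambda>i. {c i}) = {c}" if "c \<in> Y" for c
    using that assms(3) by (intro PiE_singleton) blast
  then have "Y = (\<Union>c\<in>Y. PiE J (\<lambda>i. {c i}))" by simp
  also have "\<dots> \<in> sets (PiM J M)"
    using assms(1,2) discrete by (intro sets.finite_UN sets_PiM_I_finite) auto
  finally show ?thesis .
qed

context bounded_bratteli
begin

abbreviation "mu \<equiv> PiM (vertex_index V) (coord_measure E r)"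

lemma product_prob_space_coord: "product_prob_space (coord_measure E r)"
  unfolding product_prob_space_def product_prob_space_axioms_def product_sigma_finite_def
  by (auto intro: prob_space_coord prob_space_imp_sigma_finite)

lemma prob_space_mu: "prob_space mu" by (rule prob_space_PiM) (rule prob_space_coord)

lemma countable_vertex_index: "countable (vertex_index V)"
proof (rule countable_subset)
  show "vertex_index V \<subseteq> Sigma UNIV V" unfolding vertex_index_def by auto
qed (use finite_V in \<open>auto intro: countable_finite\<close>)

lemma vertex_index_nonempty: "vertex_index V \<noteq> {}"
  using V_nonempty[of 1] unfolding vertex_index_def by auto

lemma finite_orders_at: "(n, v) \<in> vertex_index V \<Longrightarrow> finite (orders_at E r n v)"
proof -
  assume "(n, v) \<in> vertex_index V"
  then have "finite (in_edges E r n v)"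
    using finite_E unfolding vertex_index_def in_edges_def by auto
  moreover have "orders_at E r n v \<subseteq> Pow (in_edges E r n v \<times> in_edges E r n v)"
    unfolding orders_at_def linear_order_on_def partial_order_on_def preorder_on_def by auto
  ultimately show ?thesis by (meson finite_Pow_iff finite_SigmaI finite_subset)
qed

lemma orders_at_nonempty: "orders_at E r n v \<noteq> {}"
  using well_order_on[of "in_edges E r n v"] unfolding well_order_on_def orders_at_def by auto

lemma Ords_eq: "Ords = (\<Inter>i\<in>vertex_index V. {\<omega> \<in> space mu. \<omega> i \<in> case_prod (orders_at E r) i})"
proof (rule set_eqI)
  fix \<omega>
  show "\<omega> \<in> Ords \<longleftrightarrow> \<omega> \<in> (\<Inter>i\<in>vertex_index V. {\<omega> \<in> space mu. \<omega> i \<in> case_prod (orders_at E r) i})"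
    unfolding orderings_def space_PiM using vertex_index_nonempty by (simp add: PiE_iff) blast
qed

lemma Ords_subset: "Ords \<subseteq> space mu" using Ords_eq vertex_index_nonempty by auto

lemma Ords_sets: "Ords \<in> sets mu"
  unfolding Ords_eq using countable_vertex_index vertex_index_nonempty
  by (intro sets.countable_INT') (auto intro!: sets_Collect_single')

text \<open>Almost every point of the product space is an ordering: each coordinate is a.s. a
  linear order, and there are countably many coordinates.\<close>
lemma AE_Ords: "AE \<omega> in mu. \<omega> \<in> Ords"
proof -
  interpret PP: product_prob_space "coord_measure E r" "vertex_index V"
    by (rule product_prob_space_coord)
  have "AE \<omega> in mu. \<omega> i \<in> case_prod (orders_at E r) i" if i: "i \<in> vertex_index V" for i
  proof (rule PP.AE_component[OF i])
    obtain n v where nv: "i = (n, v)" by (cases i)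
    show "AE x in coord_measure E r i. x \<in> case_prod (orders_at E r) i"
      using set_pmf_of_set[OF orders_at_nonempty finite_orders_at[of n v]] i
      unfolding nv coord_measure_apply by (simp add: AE_measure_pmf_iff)
  qed
  then have "AE \<omega> in mu. \<forall>i\<in>vertex_index V. \<omega> i \<in> case_prod (orders_at E r) i"
    by (intro AE_ball_countable[THEN iffD2] countable_vertex_index) auto
  then show ?thesis using AE_space by eventually_elim (auto simp: Ords_eq)
qed

lemma determined_set_is_cylinder:
  assumes J: "J \<subseteq> vertex_index V" "finite J" and A: "A \<subseteq> Ords"
    and determined: "\<And>\<omega> \<omega>'. \<omega> \<in> A \<Longrightarrow> \<omega>' \<in> Ords \<Longrightarrow> (\<forall>i\<in>J. \<omega> i = \<omega>' i) \<Longrightarrow> \<omega>' \<in> A"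
  shows "(\<lambda>\<omega>. restrict \<omega> J) ` A \<in> sets (PiM J (coord_measure E r))"
    and "A = Ords \<inter> ((\<lambda>\<omega>. restrict \<omega> J) -` ((\<lambda>\<omega>. restrict \<omega> J) ` A) \<inter> space mu)"
proof -
  let ?Y = "(\<lambda>\<omega>. restrict \<omega> J) ` A"
  have "?Y \<subseteq> PiE J (case_prod (orders_at E r))"
  proof (rule image_subsetI)
    fix \<omega> assume "\<omega> \<in> A"
    then have "\<omega> \<in> PiE (vertex_index V) (case_prod (orders_at E r))" using A unfolding orderings_def by auto
    then show "restrict \<omega> J \<in> PiE J (case_prod (orders_at E r))" using J(1) by (auto simp: PiE_iff)
  qed
  moreover have "finite (PiE J (case_prod (orders_at E r)))"
    using J finite_orders_at by (intro finite_PiE) auto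
  ultimately have "finite ?Y" using finite_subset by blast
  then show "?Y \<in> sets (PiM J (coord_measure E r))"
    using J(2) by (intro finite_set_in_sets_PiM sets_coord) auto
  show "A = Ords \<inter> ((\<lambda>\<omega>. restrict \<omega> J) -` ?Y \<inter> space mu)"
  proof
    show "A \<subseteq> Ords \<inter> ((\<lambda>\<omega>. restrict \<omega> J) -` ?Y \<inter> space mu)" using A Ords_subset by auto
    show "Ords \<inter> ((\<lambda>\<omega>. restrict \<omega> J) -` ?Y \<inter> space mu) \<subseteq> A"
    proof
      fix \<omega>' assume "\<omega>' \<in> Ords \<inter> ((\<lambda>\<omega>. restrict \<omega> J) -` ?Y \<inter> space mu)"
      then obtain \<omega> where "\<omega> \<in> A" "\<omega>' \<in> Ords" "restrict \<omega>' J = restrict \<omega> J" by auto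
      then show "\<omega>' \<in> A" using determined by (metis restrict_apply')
    qed
  qed
qed

lemma measurable_by_cylinder:
  assumes "J \<subseteq> vertex_index V" "Y \<in> sets (PiM J (coord_measure E r))"
  shows "(\<lambda>\<omega>. restrict \<omega> J) -` Y \<inter> space mu \<in> sets mu"
  using measurable_sets[OF measurable_restrict_subset[OF assms(1)] assms(2)] .

lemma G_set_cylinder:
  shows "(\<lambda>\<omega>. restrict \<omega> (block k n)) ` G_set V E s r k n i \<in> sets (PiM (block k n) (coord_measure E r))"
    and "G_set V E s r k n i =
           Ords \<inter> ((\<lambda>\<omega>. restrict \<omega> (block k n)) -` ((\<lambda>\<omega>. restrict \<omega> (block k n)) ` G_set V E s r k n i)
                   \<inter> space mu)"
proof -
  have sub: "G_set V E s r k n i \<subseteq> Ords" by (auto simp: G_set_eq)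
  have det: "\<omega>' \<in> G_set V E s r k n i"
    if "\<omega> \<in> G_set V E s r k n i" "\<omega>' \<in> Ords" "\<forall>i\<in>block k n. \<omega> i = \<omega>' i" for \<omega> \<omega>'
    using that max_sources_cong[of \<omega> k n \<omega>'] by (auto simp: G_set_eq)
  show "(\<lambda>\<omega>. restrict \<omega> (block k n)) ` G_set V E s r k n i \<in> sets (PiM (block k n) (coord_measure E r))"
    by (rule determined_set_is_cylinder(1)[OF block_subset finite_block sub det])
  show "G_set V E s r k n i =
           Ords \<inter> ((\<lambda>\<omega>. restrict \<omega> (block k n)) -` ((\<lambda>\<omega>. restrict \<omega> (block k n)) ` G_set V E s r k n i)
                   \<inter> space mu)"
    by (rule determined_set_is_cylinder(2)[OF block_subset finite_block sub det])
qed

lemma G_set_sets: "G_set V E s r k n i \<in> sets mu"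
  by (subst G_set_cylinder(2))
     (intro sets.Int Ords_sets measurable_by_cylinder block_subset G_set_cylinder(1))

lemma measure_G_set_cylinder:
  "measure mu (G_set V E s r k n i) =
   measure mu ((\<lambda>\<omega>. restrict \<omega> (block k n)) -` ((\<lambda>\<omega>. restrict \<omega> (block k n)) ` G_set V E s r k n i) \<inter> space mu)"
  (is "_ = measure mu ?C")
proof (rule measure_eq_AE)
  show "AE x in mu. (x \<in> G_set V E s r k n i) = (x \<in> ?C)"
    using AE_Ords by eventually_elim (subst G_set_cylinder(2), auto)
qed (use measurable_by_cylinder[OF block_subset G_set_cylinder(1)] G_set_sets in auto)

lemma G_set_tail_sets: "(\<Inter>n\<in>{N..}. G_set V E s r k n j) \<in> sets mu"
  by (rule sets.countable_INT') (auto simp: G_set_sets)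

text \<open>O_B(j) is measurable: for orderings, #max paths = j iff |S(\<omega>,k,n)| = j for all
  large k and then all large n.\<close>
lemma O_j_sets: "O_j V E s r j \<in> sets mu"
proof -
  have "O_j V E s r j = {\<omega>\<in>Ords. \<exists>K. \<forall>k\<ge>K. \<exists>N. \<forall>n\<ge>N. card (max_sources \<omega> k n) = j}"
    unfolding O_j_eq_card
    by (rule Collect_cong, rule conj_cong[OF refl], rule card_max_paths_iff_sources)
  also have "\<dots> = Ords \<inter> (\<Union>K. \<Inter>k\<in>{K..}. \<Union>N. \<Inter>n\<in>{N..}. G_set V E s r k n j)"
    unfolding G_set_eq by (simp add: set_eq_iff) (simp add: Ball_def cong: conj_cong)
  also have "\<dots> \<in> sets mu"
  proof (intro sets.Int Ords_sets)
    have "(\<Union>N. \<Inter>n\<in>{N..}. G_set V E s r k n j) \<in> sets mu" for k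
      by (rule sets.countable_UN'') (simp_all add: G_set_tail_sets)
    then show "(\<Union>K. \<Inter>k\<in>{K..}. \<Union>N. \<Inter>n\<in>{N..}. G_set V E s r k n j) \<in> sets mu"
      by (intro sets.countable_UN'') (auto intro: sets.countable_INT')
  qed
  finally show ?thesis .
qed

lemma O_j_subset: "O_j V E s r j \<subseteq> Ords" by (auto simp: O_j_eq_card)

lemma indep_coordinates: "prob_space.indep_vars mu (coord_measure E r) (\<lambda>i \<omega>. \<omega> i) (vertex_index V)"
proof -
  interpret PP: product_prob_space "coord_measure E r" "vertex_index V"
    by (rule product_prob_space_coord)
  have "distr mu mu (\<lambda>x. \<lambda>i\<in>vertex_index V. x i) = distr mu mu (\<lambda>x. x)"
    by (rule distr_cong) (auto simp: space_PiM)
  moreover have "(\<Pi>\<^sub>M i\<in>vertex_index V. distr mu (coord_measure E r i) (\<lambda>\<omega>. \<omega> i)) = mu"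
    by (rule PiM_cong) (auto simp: PP.PiM_component)
  ultimately show ?thesis
    by (subst PP.indep_vars_iff_distr_eq_PiM'[OF vertex_index_nonempty]) auto
qed

section \<open>The two probabilistic estimates\<close>

text \<open>Divergence along a strictly increasing sequence forces at most i maximal paths a.s.:
  the events G_{m_k}^{m_{k+1},i} live on the disjoint blocks of levels, so they are independent,
  and the second Borel-Cantelli lemma makes infinitely many of them occur.\<close>
lemma AE_card_max_paths_le:
  assumes m: "strict_mono m"
    and div: "\<not> summable (\<lambda>k. measure mu (G_set V E s r (m k) (m (Suc k)) i))"
  shows "AE \<omega> in mu. \<omega> \<in> Ords \<and> card (max_paths \<omega>) \<le> i"
proof -
  interpret MU: prob_space mu by (rule prob_space_mu)
  define K where "K k = block (m k) (m (Suc k))" for k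
  define Y where "Y k = (\<lambda>\<omega>. restrict \<omega> (K k)) ` G_set V E s r (m k) (m (Suc k)) i" for k
  have "K a \<inter> K b = {}" if "a < b" for a b
    using strict_mono_less_eq[OF m, of "Suc a" b] that unfolding K_def block_def by auto
  then have disjoint: "disjoint_family_on K UNIV"
    unfolding disjoint_family_on_def by (metis inf_commute nat_neq_iff)
  have "MU.indep_vars (\<lambda>k. PiM (K k) (coord_measure E r)) (\<lambda>k \<omega>. restrict \<omega> (K k)) UNIV"
    using MU.indep_vars_restrict[OF indep_coordinates _ disjoint] block_subset unfolding K_def by simp
  moreover have "Y k \<in> sets (PiM (K k) (coord_measure E r))" for k
    unfolding Y_def K_def by (rule G_set_cylinder(1))
  moreover have "\<not> summable (\<lambda>k. MU.prob ((\<lambda>\<omega>. restrict \<omega> (K k)) -` Y k \<inter> space mu))"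
    using div unfolding Y_def K_def measure_G_set_cylinder .
  ultimately have "AE \<omega> in mu. \<forall>K0. \<exists>k\<ge>K0. restrict \<omega> (K k) \<in> Y k"
    by (rule MU.borel_cantelli_AE2)
  then show ?thesis using AE_Ords
  proof eventually_elim
    case (elim \<omega>)
    have "\<exists>k\<ge>K0. card (max_sources \<omega> (m k) (m (Suc k))) = i" for K0
    proof -
      obtain k where k: "k \<ge> K0" "restrict \<omega> (K k) \<in> Y k" using elim(1) by blast
      then have "\<omega> \<in> Ords \<inter> ((\<lambda>\<omega>. restrict \<omega> (K k)) -` Y k \<inter> space mu)"
        using elim(2) Ords_subset by auto
      then have "\<omega> \<in> G_set V E s r (m k) (m (Suc k)) i"
        unfolding Y_def K_def by (subst G_set_cylinder(2))
      then show ?thesis using k(1) by (auto simp: G_set_eq)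
    qed
    then show ?case using card_max_paths_le_if_frequently[OF elim(2) m] elim(2) by blast
  qed
qed

lemma not_summable_along_sequence:
  fixes f :: "nat \<Rightarrow> nat \<Rightarrow> real"
  assumes c: "c > 0" and freq: "\<And>k L. k \<ge> k0 \<Longrightarrow> \<exists>n>L. f k n > c"
  shows "\<exists>nk. strict_mono nk \<and> \<not> summable (\<lambda>k. f (nk k) (nk (Suc k)))"
proof -
  define nk where "nk = rec_nat k0 (\<lambda>_ p. SOME n. n > p \<and> f p n > c)"
  have nk_0: "nk 0 = k0" unfolding nk_def by simp
  have nk_Suc: "nk (Suc i) = (SOME n. n > nk i \<and> f (nk i) n > c)" for i
    unfolding nk_def by simp
  have nk: "nk i \<ge> k0 \<and> nk (Suc i) > nk i \<and> f (nk i) (nk (Suc i)) > c" for i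
  proof (induction i)
    case 0 show ?case using someI_ex[OF freq[of k0 k0]] unfolding nk_Suc nk_0 by simp
  next
    case (Suc i)
    then have "nk (Suc i) \<ge> k0" by simp
    with someI_ex[OF freq[OF this, of "nk (Suc i)"]] show ?case unfolding nk_Suc[of "Suc i"] by simp
  qed
  have "\<not> summable (\<lambda>k. f (nk k) (nk (Suc k)))"
  proof
    assume "summable (\<lambda>k. f (nk k) (nk (Suc k)))"
    then have "eventually (\<lambda>k. f (nk k) (nk (Suc k)) < c) sequentially"
      using c by (intro order_tendstoD(2)[OF summable_LIMSEQ_zero])
    then obtain k where "f (nk k) (nk (Suc k)) < c" unfolding eventually_sequentially by blast
    then show False using nk[of k] by simp
  qed
  moreover have "strict_mono nk" using nk by (simp add: strict_mono_Suc_iff)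
  ultimately show ?thesis by blast
qed

text \<open>Approximation of O_B(j) from inside: the orderings in O_B(j) with |T(\<omega>,k)| = j,
  and among those the ones with |S(\<omega>,k,n)| = j for all n \<ge> N (a subset of G_k^{N,j}).\<close>
definition trace_event where
  "trace_event j k = {\<omega> \<in> O_j V E s r j. card (max_trace \<omega> k) = j}"

definition tail_event where
  "tail_event j k N = O_j V E s r j \<inter> (\<Inter>n\<in>{N..}. G_set V E s r k n j)"

lemma tail_event_sets: "tail_event j k N \<in> sets mu"
  unfolding tail_event_def by (intro sets.Int O_j_sets G_set_tail_sets)

lemma tail_event_iff:
  "\<omega> \<in> tail_event j k N \<longleftrightarrow> \<omega> \<in> O_j V E s r j \<and> (\<forall>n\<ge>N. card (max_sources \<omega> k n) = j)"
  using O_j_subset by (simp add: tail_event_def G_set_eq) (auto simp: Ball_def)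

lemma tail_event_subset_G_set: "tail_event j k N \<subseteq> G_set V E s r k N j"
  unfolding tail_event_def by auto

text \<open>By stabilisation of S(\<omega>,k,n), the tail events exhaust the trace event.\<close>
lemma trace_event_eq_UN: "trace_event j k = (\<Union>N. tail_event j k N)"
proof (rule set_eqI)
  fix \<omega>
  show "\<omega> \<in> trace_event j k \<longleftrightarrow> \<omega> \<in> (\<Union>N. tail_event j k N)"
  proof (cases "\<omega> \<in> O_j V E s r j")
    case True
    then have "\<omega> \<in> Ords" using O_j_subset by blast
    then show ?thesis using True by (simp add: trace_event_def tail_event_iff card_max_trace_iff)
  next
    case False then show ?thesis by (simp add: trace_event_def tail_event_iff)
  qed
qed

lemma trace_event_sets: "trace_event j k \<in> sets mu"
  unfolding trace_event_eq_UN by (rule sets.countable_UN'') (simp_all add: tail_event_sets)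

lemma measure_tail_event_tendsto:
  "(\<lambda>N. measure mu (tail_event j k N)) \<longlonglongrightarrow> measure mu (trace_event j k)"
proof -
  interpret MU: prob_space mu by (rule prob_space_mu)
  have "incseq (tail_event j k)" by (intro incseq_SucI subsetI) (simp add: tail_event_iff)
  then show ?thesis
    using MU.finite_Lim_measure_incseq[of "tail_event j k"] tail_event_sets
    unfolding trace_event_eq_UN by auto
qed

text \<open>Since |T(\<omega>,k)| increases to the number of maximal paths, the trace events increase
  to O_B(j).\<close>
lemma measure_trace_event_tendsto:
  "(\<lambda>k. measure mu (trace_event j k)) \<longlonglongrightarrow> measure mu (O_j V E s r j)"
proof -
  interpret MU: prob_space mu by (rule prob_space_mu)
  have "incseq (trace_event j)"
  proof (rule incseq_SucI, rule subsetI)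
    fix k \<omega> assume "\<omega> \<in> trace_event j k"
    then have w: "\<omega> \<in> O_j V E s r j" "card (max_trace \<omega> k) = j" by (simp_all add: trace_event_def)
    then have "\<omega> \<in> Ords" "card (max_paths \<omega>) = j" by (simp_all add: O_j_eq_card)
    then have "card (max_trace \<omega> (Suc k)) = j"
      using card_max_trace_Suc card_max_trace_le w(2) by (metis le_antisym)
    then show "\<omega> \<in> trace_event j (Suc k)" using w(1) by (simp add: trace_event_def)
  qed
  moreover have "(\<Union>k. trace_event j k) = O_j V E s r j"
  proof
    show "(\<Union>k. trace_event j k) \<subseteq> O_j V E s r j" unfolding trace_event_def by blast
    show "O_j V E s r j \<subseteq> (\<Union>k. trace_event j k)"
    proof
      fix \<omega> assume w: "\<omega> \<in> O_j V E s r j"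
      then have "\<omega> \<in> Ords" "card (max_paths \<omega>) = j" by (simp_all add: O_j_eq_card)
      then obtain K where "card (max_trace \<omega> K) = j" using card_max_paths_iff by blast
      then show "\<omega> \<in> (\<Union>k. trace_event j k)" using w unfolding trace_event_def by blast
    qed
  qed
  ultimately show ?thesis
    using MU.finite_Lim_measure_incseq[of "trace_event j"] trace_event_sets
    by auto
qed

text \<open>If O_B(j) has measure c > 0, then for all large k the trace event has measure > c/2,
  hence so do tail events (and thus G_k^{n,j}) for arbitrarily large n; a sequence (n_k)
  can then be chosen along which the series diverges.\<close>
lemma divergent_sequence_if_O_j_positive:
  assumes pos: "measure mu (O_j V E s r j) > 0"
  shows "\<exists>nk. strict_mono nk \<and> \<not> summable (\<lambda>k. measure mu (G_set V E s r (nk k) (nk (Suc k)) j))"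
proof -
  interpret MU: prob_space mu by (rule prob_space_mu)
  define c where "c = measure mu (O_j V E s r j)"
  obtain k0 where k0: "\<And>k. k \<ge> k0 \<Longrightarrow> measure mu (trace_event j k) > c / 2"
    using order_tendstoD(1)[OF measure_trace_event_tendsto, of "c / 2" j] pos
    unfolding c_def eventually_sequentially by auto
  have freq: "\<exists>n>L. measure mu (G_set V E s r k n j) > c / 2" if k: "k \<ge> k0" for k L
  proof -
    obtain N0 where N0: "\<And>N. N \<ge> N0 \<Longrightarrow> measure mu (tail_event j k N) > c / 2"
      using order_tendstoD(1)[OF measure_tail_event_tendsto, of "c / 2" j k] k0[OF k]
      unfolding eventually_sequentially by auto
    define n where "n = max N0 (Suc L)"
    have "measure mu (tail_event j k n) \<le> measure mu (G_set V E s r k n j)"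
      by (intro MU.finite_measure_mono tail_event_subset_G_set G_set_sets)
    moreover have "measure mu (tail_event j k n) > c / 2" using N0 unfolding n_def by simp
    ultimately have "measure mu (G_set V E s r k n j) > c / 2" by linarith
    moreover have "n > L" unfolding n_def by simp
    ultimately show ?thesis by blast
  qed
  show ?thesis
    by (rule not_summable_along_sequence[where c="c / 2"
          and f="\<lambda>k n. measure mu (G_set V E s r k n j)", OF _ freq])
       (use pos in \<open>simp add: c_def\<close>)
qed

definition divergent_for :: "nat \<Rightarrow> bool" where
  "divergent_for j \<longleftrightarrow>
     (\<exists>nk. strict_mono nk \<and> \<not> summable (\<lambda>k. measure mu (G_set V E s r (nk k) (nk (Suc k)) j)))"

text \<open>Full measure of O_B(j) excludes divergence for every i < j, since divergence for i
  would give at most i maximal paths almost surely.\<close>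
lemma not_divergent_below:
  assumes "i < j" "measure mu (O_j V E s r j) = 1"
  shows "\<not> divergent_for i"
proof
  interpret MU: prob_space mu by (rule prob_space_mu)
  assume "divergent_for i"
  then obtain mk where mk: "strict_mono mk"
    "\<not> summable (\<lambda>k. measure mu (G_set V E s r (mk k) (mk (Suc k)) i))"
    unfolding divergent_for_def by blast
  have "AE \<omega> in mu. \<omega> \<in> O_j V E s r j"
    using MU.prob_eq_1[OF O_j_sets] assms(2) by blast
  with AE_card_max_paths_le[OF mk] have "AE \<omega> in mu. False"
    by eventually_elim (use assms(1) in \<open>auto simp: O_j_eq_card\<close>)
  then show False by (simp add: MU.AE_False)
qed

text \<open>Divergence for j gives at most j maximal paths a.s.; if moreover no divergence occurs
  for any i < j, then each O_B(i) with 1 \<le> i < j is null, and exactly j paths remain.\<close>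
lemma O_j_full_if_divergent:
  assumes div: "divergent_for j" and below: "\<And>i. 1 \<le> i \<Longrightarrow> i < j \<Longrightarrow> \<not> divergent_for i"
  shows "measure mu (O_j V E s r j) = 1"
proof -
  interpret MU: prob_space mu by (rule prob_space_mu)
  obtain nk where nk: "strict_mono nk" "\<not> summable (\<lambda>k. measure mu (G_set V E s r (nk k) (nk (Suc k)) j))"
    using div unfolding divergent_for_def by blast
  have "AE \<omega> in mu. \<omega> \<notin> O_j V E s r i" if "i \<in> {1..<j}" for i
  proof -
    have "\<not> divergent_for i" using below that by simp
    then have "\<not> measure mu (O_j V E s r i) > 0"
      using divergent_sequence_if_O_j_positive unfolding divergent_for_def by blast
    then have "measure mu (O_j V E s r i) = 0" using measure_nonneg[of mu] by (meson not_less order_antisym)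
    then show ?thesis using MU.prob_eq_0[OF O_j_sets] by blast
  qed
  then have "AE \<omega> in mu. \<forall>i\<in>{1..<j}. \<omega> \<notin> O_j V E s r i"
    by (intro AE_finite_allI) auto
  with AE_card_max_paths_le[OF nk] have "AE \<omega> in mu. \<omega> \<in> O_j V E s r j"
  proof eventually_elim
    case (elim \<omega>)
    then have O: "\<omega> \<in> Ords" and le: "card (max_paths \<omega>) \<le> j" by auto
    have "\<omega> \<in> O_j V E s r (card (max_paths \<omega>))" using O by (simp add: O_j_eq_card)
    then have "card (max_paths \<omega>) \<notin> {1..<j}" using elim(2) by blast
    then have "card (max_paths \<omega>) = j" using le card_max_paths_ge_1[OF O] by auto
    then show ?case using O by (simp add: O_j_eq_card)
  qed
  then show ?thesis using MU.prob_eq_1[OF O_j_sets] by blast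
qed

theorem O_j_full_iff:
  "measure mu (O_j V E s r j) = 1 \<longleftrightarrow>
     divergent_for j \<and> (\<forall>i. 1 \<le> i \<and> i < j \<longrightarrow> \<not> divergent_for i)"
proof
  assume full: "measure mu (O_j V E s r j) = 1"
  then show "divergent_for j \<and> (\<forall>i. 1 \<le> i \<and> i < j \<longrightarrow> \<not> divergent_for i)"
    using divergent_sequence_if_O_j_positive[of j] not_divergent_below[OF _ full]
    unfolding divergent_for_def by simp
qed (use O_j_full_if_divergent in blast)

end

theorem mainTheorem18:
  fixes V :: "nat \<Rightarrow> 'v set" and E :: "nat \<Rightarrow> 'e set"
    and s r :: "nat \<Rightarrow> 'e \<Rightarrow> 'v" and d :: nat
  defines "\<mu> \<equiv> ordering_measure V E r"
  assumes "bratteli V E s r"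
    and "aperiodic E s r"
    and "has_rank V d"
  shows "(measure \<mu> (O_j V E s r 1) = 1 \<longleftrightarrow>
            (\<exists>nk::nat \<Rightarrow> nat. strict_mono nk \<and>
               \<not> summable (\<lambda>k. measure \<mu> (G_set V E s r (nk k) (nk (Suc k)) 1))))
       \<and> (\<forall>j. 1 < j \<and> j \<le> d \<longrightarrow>
            (measure \<mu> (O_j V E s r j) = 1 \<longleftrightarrow>
              (\<exists>nk::nat \<Rightarrow> nat. strict_mono nk \<and>
                 \<not> summable (\<lambda>k. measure \<mu> (G_set V E s r (nk k) (nk (Suc k)) j))) \<and>
              (\<forall>i. 1 \<le> i \<and> i < j \<longrightarrow> (\<forall>mk::nat \<Rightarrow> nat. strict_mono mk \<longrightarrow>
                 summable (\<lambda>k. measure \<mu> (G_set V E s r (mk k) (mk (Suc k)) i))))))"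
proof -
  from assms(4) obtain Mb where "\<And>n. card (V n) \<le> Mb" unfolding has_rank_def by blast
  with assms(2) interpret bounded_bratteli V E s r Mb by unfold_locales
  show ?thesis
    unfolding \<mu>_def ordering_measure_PiM
    using O_j_full_iff[of 1] O_j_full_iff unfolding divergent_for_def by auto
qed

end
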